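(* Let $R$ be a suitable ring with a nice topology, and suppose that convergent limits of units are units, i.e. whenever a net of units of $R$ converges to an element $w\in R$, $w$ is a unit. Then $R$ is an $\aleph_0$-exchange ring.
   Context: A ring $R$ is suitable if whenever $x+y=1$ in $R$ there are orthogonal idempotents $e\in Rx$, $f\in Ry$ with $e+f=1$. A linear Hausdorff topology on $R$ is a ring topology with a basis $\mathfrak U$ of neighborhoods of $0$ consisting of left ideals, with $\bigcap_{U\in\mathfrak U}U=0$. A family $\{x_i\}_{i\in I}\subseteq R$ is summable to $r$ if for every $U\in\mathfrak U$ there is a finite $F'\subseteq I$ with $\sum_{i\in F}x_i-r\in U$ for all finite $F$ with $F'\subseteq F\subseteq I$ (write $\sum_{i\in I}x_i=r$; the family is then called summable). The topology is nice if it is linear, Hausdorff, and for every summable family $\{x_i\}_{i\in I}$ and every family $\{r_i\}_{i\in I}\subseteq R$ the family $\{r_ix_i\}_{i\in I}$ is summable. For a cardinal $\aleph$, $R$ is an $\aleph$-exchange ring if for every family $\{x_i\}_{i\in I}$ with $|I|\le\aleph$ summable to $1$ there exist pairwise orthogonal idempotents $e_i\in Rx_i$ forming a summable family with $\sum_{i\in I}e_i=1$. *)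

theory Defs
  imports "HOL-Library.Countable_Set"
begin

text \<open>Throughout, the ring R is the type 'a of class ring_1 (associative, with 1,
  not necessarily commutative). A linear topology is given by its basis 
  of neighbourhoods of 0, a set of subsets of R.\<close>

definition left_ideal :: "'a::ring_1 set \<Rightarrow> bool" where
  "left_ideal L \<longleftrightarrow> 0 \<in> L \<and> (\<forall>x\<in>L. \<forall>y\<in>L. x + y \<in> L) \<and> (\<forall>r. \<forall>x\<in>L. r * x \<in> L)"

definition is_unit :: "'a::ring_1 \<Rightarrow> bool" where
  "is_unit u \<longleftrightarrow> (\<exists>v. u * v = 1 \<and> v * u = 1)"

definition idempotent :: "'a::ring_1 \<Rightarrow> bool" where
  "idempotent e \<longleftrightarrow> e * e = e"

definition orthogonal :: "'a::ring_1 \<Rightarrow> 'a \<Rightarrow> bool" where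
  "orthogonal e f \<longleftrightarrow> e * f = 0 \<and> f * e = 0"

definition in_left_mult :: "'a::ring_1 \<Rightarrow> 'a \<Rightarrow> bool" where
  "in_left_mult e x \<longleftrightarrow> (\<exists>r. e = r * x)"

definition suitable :: "'a::ring_1 itself \<Rightarrow> bool" where
  "suitable _ \<longleftrightarrow> (\<forall>x y::'a. x + y = 1 \<longrightarrow>
     (\<exists>e f. idempotent e \<and> idempotent f \<and> orthogonal e f \<and> e + f = 1
            \<and> in_left_mult e x \<and> in_left_mult f y))"

text \<open>A set U of left ideals is a basis of neighbourhoods of 0 for a ring topology
  (the topology in which the neighbourhoods of x are the sets containing some x + U):
  it is a nonempty filter base of left ideals, and right multiplication by each
  element is continuous at 0 (the remaining ring-topology axioms are automatic for
  left ideals).\<close>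
definition linear_topology :: "'a::ring_1 set set \<Rightarrow> bool" where
  "linear_topology \<U> \<longleftrightarrow> \<U> \<noteq> {} \<and> (\<forall>U\<in>\<U>. left_ideal U)
     \<and> (\<forall>U\<in>\<U>. \<forall>V\<in>\<U>. \<exists>W\<in>\<U>. W \<subseteq> U \<inter> V)
     \<and> (\<forall>U\<in>\<U>. \<forall>r. \<exists>V\<in>\<U>. \<forall>v\<in>V. v * r \<in> U)"

definition linear_hausdorff :: "'a::ring_1 set set \<Rightarrow> bool" where
  "linear_hausdorff \<U> \<longleftrightarrow> linear_topology \<U> \<and> \<Inter>\<U> = {0}"

definition summable_to :: "'a::ring_1 set set \<Rightarrow> 'i set \<Rightarrow> ('i \<Rightarrow> 'a) \<Rightarrow> 'a \<Rightarrow> bool" where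
  "summable_to \<U> I x r \<longleftrightarrow> (\<forall>U\<in>\<U>. \<exists>F'. finite F' \<and> F' \<subseteq> I \<and>
      (\<forall>F. finite F \<and> F' \<subseteq> F \<and> F \<subseteq> I \<longrightarrow> sum x F - r \<in> U))"

definition summable_fam :: "'a::ring_1 set set \<Rightarrow> 'i set \<Rightarrow> ('i \<Rightarrow> 'a) \<Rightarrow> bool" where
  "summable_fam \<U> I x \<longleftrightarrow> (\<exists>r. summable_to \<U> I x r)"

text \<open>Niceness, with families indexed by subsets of the type 'a set set.\<close>
definition nice :: "'a::ring_1 set set \<Rightarrow> bool" where
  "nice \<U> \<longleftrightarrow> linear_hausdorff \<U> \<and>
     (\<forall>(I::'a set set set) x r. summable_fam \<U> I x \<longrightarrow> summable_fam \<U> I (\<lambda>i. r i * x i))"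

text \<open>Nets: indexed by a directed set D (with preorder le); directed sets are taken
  with elements of type 'a set.\<close>
definition directed :: "'d set \<Rightarrow> ('d \<Rightarrow> 'd \<Rightarrow> bool) \<Rightarrow> bool" where
  "directed D le \<longleftrightarrow> D \<noteq> {} \<and> (\<forall>d\<in>D. le d d)
     \<and> (\<forall>a\<in>D. \<forall>b\<in>D. \<forall>c\<in>D. le a b \<and> le b c \<longrightarrow> le a c)
     \<and> (\<forall>a\<in>D. \<forall>b\<in>D. \<exists>c\<in>D. le a c \<and> le b c)"

definition net_converges :: "'a::ring_1 set set \<Rightarrow> 'd set \<Rightarrow> ('d \<Rightarrow> 'd \<Rightarrow> bool) \<Rightarrow> ('d \<Rightarrow> 'a) \<Rightarrow> 'a \<Rightarrow> bool" where
  "net_converges \<U> D le u w \<longleftrightarrow>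
     (\<forall>U\<in>\<U>. \<exists>d0\<in>D. \<forall>d\<in>D. le d0 d \<longrightarrow> u d - w \<in> U)"

definition limits_of_units_are_units :: "'a::ring_1 set set \<Rightarrow> bool" where
  "limits_of_units_are_units \<U> \<longleftrightarrow>
     (\<forall>(D::'a set set) le u w. directed D le \<and> (\<forall>d\<in>D. is_unit (u d))
        \<and> net_converges \<U> D le u w \<longrightarrow> is_unit w)"

definition aleph0_exchange :: "'a::ring_1 set set \<Rightarrow> 'i itself \<Rightarrow> bool" where
  "aleph0_exchange \<U> _ \<longleftrightarrow>
     (\<forall>(I::'i set) x. countable I \<and> summable_to \<U> I x 1 \<longrightarrow>
        (\<exists>e. (\<forall>i\<in>I. idempotent (e i) \<and> in_left_mult (e i) (x i))
             \<and> (\<forall>i\<in>I. \<forall>j\<in>I. i \<noteq> j \<longrightarrow> orthogonal (e i) (e j))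
             \<and> summable_to \<U> I e 1))"

end

theory Submission
  imports Defs
begin

text \<open>Put \<open>t\<^sub>n = 1 - (x\<^sub>0 + \<dots> + x\<^sub>n\<^sub>-\<^sub>1)\<close>, so that \<open>t\<^sub>n = x\<^sub>n + t\<^sub>n\<^sub>+\<^sub>1\<close> and \<open>t\<^sub>n \<rightarrow> 0\<close>.
  Applying suitability in corner rings \<open>f R f\<close>, one step at a time, produces a decreasing
  chain of idempotents \<open>1 = F\<^sub>0 \<ge> F\<^sub>1 \<ge> \<dots>\<close>, elements \<open>B\<^sub>n \<in> R t\<^sub>n\<close> with \<open>B\<^sub>n F\<^sub>n = F\<^sub>n\<close>, and
  elements \<open>A\<^sub>n \<in> R x\<^sub>n\<close> mapping onto the orthogonal idempotents \<open>E\<^sub>n = F\<^sub>n - F\<^sub>n\<^sub>+\<^sub>1\<close>, with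
  \<open>E\<^sub>m A\<^sub>n = \<delta>\<^sub>m\<^sub>n A\<^sub>n\<close>. Every \<open>W\<^sub>n = A\<^sub>0 + \<dots> + A\<^sub>n\<^sub>-\<^sub>1 + B\<^sub>n\<close> is a unit, because \<open>W\<^sub>n\<^sub>+\<^sub>1\<close> is
  \<open>W\<^sub>n\<close> plus a square-zero element of the corner \<open>F\<^sub>n R (1 - F\<^sub>n)\<close>. By niceness the
  \<open>A\<^sub>n = c\<^sub>n x\<^sub>n\<close> sum to some \<open>w\<close>; since \<open>B\<^sub>n \<in> R t\<^sub>n\<close> tends to \<open>0\<close>, the units \<open>W\<^sub>n\<close> approach
  \<open>w\<close>, so \<open>w\<close> is a unit. Continuity gives \<open>E\<^sub>m w = A\<^sub>m\<close>, hence the \<open>e\<^sub>n = w\<^sup>-\<^sup>1 A\<^sub>n\<close> are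
  orthogonal idempotents in \<open>R x\<^sub>n\<close> summing to \<open>w\<^sup>-\<^sup>1 w = 1\<close>. Countable families reduce to
  \<open>\<nat>\<close>-indexed ones by padding with zeros.\<close>

section \<open>Linear topologies and summable families\<close>

lemma left_ideal_uminus: "left_ideal L \<Longrightarrow> x \<in> L \<Longrightarrow> - x \<in> L"
  unfolding left_ideal_def by (metis mult_minus1)

lemma left_ideal_diff: "left_ideal L \<Longrightarrow> x \<in> L \<Longrightarrow> y \<in> L \<Longrightarrow> x - y \<in> L"
  using left_ideal_uminus[of L y] unfolding left_ideal_def by (metis diff_conv_add_uminus)

lemma linear_topology_left_ideal: "linear_topology \<U> \<Longrightarrow> U \<in> \<U> \<Longrightarrow> left_ideal U"
  unfolding linear_topology_def by blast

lemma nice_imp_linear_hausdorff: "nice \<U> \<Longrightarrow> linear_hausdorff \<U>"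
  unfolding nice_def by simp

lemma linear_hausdorff_imp_linear_topology: "linear_hausdorff \<U> \<Longrightarrow> linear_topology \<U>"
  unfolding linear_hausdorff_def by simp

lemma linear_topology_finite_Inter:
  assumes "linear_topology \<U>"
  shows "finite \<V> \<Longrightarrow> \<V> \<noteq> {} \<Longrightarrow> \<V> \<subseteq> \<U> \<Longrightarrow> \<exists>W\<in>\<U>. W \<subseteq> \<Inter>\<V>"
proof (induction \<V> rule: finite_ne_induct)
  case (singleton U)
  then show ?case by auto
next
  case (insert U \<V>)
  then obtain W where W: "W \<in> \<U>" "W \<subseteq> \<Inter>\<V>" by auto
  moreover have "U \<in> \<U>" using insert.prems by auto
  ultimately obtain W' where "W' \<in> \<U>" "W' \<subseteq> U \<inter> W"
    using assms unfolding linear_topology_def by blast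
  with W show ?case by auto
qed

lemma finite_linear_hausdorff_discrete:
  assumes "linear_hausdorff \<U>" and "finite \<U>"
  shows "{0} \<in> \<U>"
proof -
  have lt: "linear_topology \<U>" and Inter: "\<Inter>\<U> = {0}"
    using assms(1) unfolding linear_hausdorff_def by simp_all
  have "\<U> \<noteq> {}" using lt unfolding linear_topology_def by simp
  then obtain W where W: "W \<in> \<U>" "W \<subseteq> {0}"
    using linear_topology_finite_Inter[OF lt assms(2)] Inter by blast
  moreover have "0 \<in> W" using linear_topology_left_ideal[OF lt W(1)] unfolding left_ideal_def by simp
  ultimately have "W = {0}" by blast
  with W(1) show ?thesis by simp
qed

lemma summable_to_iff_eventually:
  "summable_to \<U> I x r \<longleftrightarrow> (\<forall>U\<in>\<U>. \<forall>\<^sub>F F in finite_subsets_at_top I. sum x F - r \<in> U)"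
  unfolding summable_to_def eventually_finite_subsets_at_top by blast

lemma filtermap_inter_finite_subsets_at_top:
  assumes "A \<subseteq> B"
  shows "filtermap (\<lambda>F. F \<inter> A) (finite_subsets_at_top B) = finite_subsets_at_top A"
  unfolding filter_eq_iff eventually_filtermap eventually_finite_subsets_at_top
proof (intro allI iffI)
  fix P
  assume "\<exists>X. finite X \<and> X \<subseteq> B \<and> (\<forall>Y. finite Y \<and> X \<subseteq> Y \<and> Y \<subseteq> B \<longrightarrow> P (Y \<inter> A))"
  then obtain X where X: "finite X" "X \<subseteq> B" "\<forall>Y. finite Y \<and> X \<subseteq> Y \<and> Y \<subseteq> B \<longrightarrow> P (Y \<inter> A)"
    by blast
  have "P Y" if Y: "finite Y" "X \<inter> A \<subseteq> Y" "Y \<subseteq> A" for Y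
  proof -
    have "P ((Y \<union> X) \<inter> A)" by (rule X(3)[rule_format]) (use X(1,2) Y assms in auto)
    moreover have "(Y \<union> X) \<inter> A = Y" using Y(2,3) by blast
    ultimately show ?thesis by simp
  qed
  then show "\<exists>X. finite X \<and> X \<subseteq> A \<and> (\<forall>Y. finite Y \<and> X \<subseteq> Y \<and> Y \<subseteq> A \<longrightarrow> P Y)"
    using X(1) by (intro exI[of _ "X \<inter> A"]) auto
next
  fix P
  assume "\<exists>X. finite X \<and> X \<subseteq> A \<and> (\<forall>Y. finite Y \<and> X \<subseteq> Y \<and> Y \<subseteq> A \<longrightarrow> P Y)"
  then obtain X where X: "finite X" "X \<subseteq> A" "\<forall>Y. finite Y \<and> X \<subseteq> Y \<and> Y \<subseteq> A \<longrightarrow> P Y"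
    by blast
  show "\<exists>X. finite X \<and> X \<subseteq> B \<and> (\<forall>Y. finite Y \<and> X \<subseteq> Y \<and> Y \<subseteq> B \<longrightarrow> P (Y \<inter> A))"
  proof (intro exI[of _ X] conjI allI impI)
    fix Y assume "finite Y \<and> X \<subseteq> Y \<and> Y \<subseteq> B"
    then show "P (Y \<inter> A)" by (intro X(3)[rule_format]) (use X(2) in auto)
  qed (use X(1,2) assms in auto)
qed

lemma summable_to_reindex:
  assumes "inj_on g I" and "\<And>i. i \<in> I \<Longrightarrow> y (g i) = x i"
  shows "summable_to \<U> (g ` I) y s \<longleftrightarrow> summable_to \<U> I x s"
proof -
  have "\<forall>\<^sub>F F in finite_subsets_at_top I. sum y (g ` F) = sum x F"
  proof (rule eventually_finite_subsets_at_top_weakI)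
    fix F assume "F \<subseteq> I"
    then show "sum y (g ` F) = sum x F"
      using assms by (simp add: sum.reindex inj_on_subset subset_iff)
  qed
  then have "(\<forall>\<^sub>F F in finite_subsets_at_top (g ` I). sum y F - s \<in> U) \<longleftrightarrow>
        (\<forall>\<^sub>F F in finite_subsets_at_top I. sum x F - s \<in> U)" for U
    unfolding filtermap_image_finite_subsets_at_top[OF assms(1), symmetric] eventually_filtermap
    by (intro eventually_subst) (auto elim: eventually_mono)
  then show ?thesis unfolding summable_to_iff_eventually by simp
qed

lemma summable_fam_reindex:
  assumes "inj_on g I" and "\<And>i. i \<in> I \<Longrightarrow> y (g i) = x i"
  shows "summable_fam \<U> (g ` I) y \<longleftrightarrow> summable_fam \<U> I x"
  unfolding summable_fam_def using summable_to_reindex[of g I y x, OF assms] by blast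

lemma summable_to_zero_extend:
  assumes "A \<subseteq> B" and "\<And>i. i \<in> B - A \<Longrightarrow> x i = 0"
  shows "summable_to \<U> B x r \<longleftrightarrow> summable_to \<U> A x r"
proof -
  have "\<forall>\<^sub>F F in finite_subsets_at_top B. sum x (F \<inter> A) = sum x F"
  proof (rule eventually_finite_subsets_at_top_weakI)
    fix F assume "finite F" "F \<subseteq> B"
    then show "sum x (F \<inter> A) = sum x F" using assms(2) by (intro sum.mono_neutral_left) auto
  qed
  then have "(\<forall>\<^sub>F F in finite_subsets_at_top A. sum x F - r \<in> U) \<longleftrightarrow>
        (\<forall>\<^sub>F F in finite_subsets_at_top B. sum x F - r \<in> U)" for U
    unfolding filtermap_inter_finite_subsets_at_top[OF assms(1), symmetric] eventually_filtermap
    by (intro eventually_subst) (auto elim: eventually_mono)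
  then show ?thesis unfolding summable_to_iff_eventually by simp
qed

lemma summable_to_finite_support:
  assumes "linear_topology \<U>" and "finite F" "F \<subseteq> I" and "\<And>i. i \<in> I - F \<Longrightarrow> x i = 0"
  shows "summable_to \<U> I x (sum x F)"
proof -
  have "summable_to \<U> F x (sum x F)"
    using linear_topology_left_ideal[OF assms(1)]
    unfolding summable_to_iff_eventually eventually_finite_subsets_at_top_finite[OF assms(2)]
    by (simp add: left_ideal_def)
  then show ?thesis using summable_to_zero_extend[of F I x, OF assms(3,4)] by blast
qed

lemma summable_to_discrete_finite_support:
  assumes "{0} \<in> \<U>" and "summable_to \<U> I x r"
  obtains F where "finite F" "F \<subseteq> I" "\<And>i. i \<in> I - F \<Longrightarrow> x i = 0"
proof -
  obtain F where F: "finite F" "F \<subseteq> I"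
    and sum_eq: "\<And>G. finite G \<Longrightarrow> F \<subseteq> G \<Longrightarrow> G \<subseteq> I \<Longrightarrow> sum x G = r"
    using assms unfolding summable_to_def by fastforce
  have "x i = 0" if "i \<in> I - F" for i
  proof -
    have "x i + sum x F = sum x (insert i F)" using F(1) that by simp
    also have "\<dots> = r" by (rule sum_eq) (use F that in auto)
    also have "r = sum x F" by (rule sum_eq[symmetric]) (use F in auto)
    finally show ?thesis by simp
  qed
  with F show ?thesis by (rule that)
qed

lemma summable_to_mult_left:
  assumes "linear_topology \<U>" and "summable_to \<U> I x r"
  shows "summable_to \<U> I (\<lambda>i. c * x i) (c * r)"
  unfolding summable_to_iff_eventually
proof
  fix U assume U: "U \<in> \<U>"
  with assms(2) have "\<forall>\<^sub>F F in finite_subsets_at_top I. sum x F - r \<in> U"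
    unfolding summable_to_iff_eventually by blast
  then show "\<forall>\<^sub>F F in finite_subsets_at_top I. (\<Sum>i\<in>F. c * x i) - c * r \<in> U"
  proof (rule eventually_mono)
    fix F assume "sum x F - r \<in> U"
    then have "c * (sum x F - r) \<in> U"
      using linear_topology_left_ideal[OF assms(1) U] unfolding left_ideal_def by blast
    then show "(\<Sum>i\<in>F. c * x i) - c * r \<in> U" by (simp add: sum_distrib_left right_diff_distrib)
  qed
qed

lemma summable_to_unique:
  assumes "linear_hausdorff \<U>" and "summable_to \<U> I x r" and "summable_to \<U> I x r'"
  shows "r = r'"
proof -
  have "r' - r \<in> U" if U: "U \<in> \<U>" for U
  proof -
    have ideal: "left_ideal U"
      by (rule linear_topology_left_ideal[OF linear_hausdorff_imp_linear_topology[OF assms(1)] U])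
    have "\<forall>\<^sub>F F in finite_subsets_at_top I. sum x F - r \<in> U \<and> sum x F - r' \<in> U"
      using assms(2,3) U unfolding summable_to_iff_eventually by (intro eventually_conj) blast+
    then obtain F where "sum x F - r \<in> U" "sum x F - r' \<in> U"
      using eventually_happens' finite_subsets_at_top_neq_bot by blast
    from left_ideal_diff[OF ideal this] show ?thesis by simp
  qed
  then have "r' - r \<in> \<Inter>\<U>" by blast
  then show ?thesis using assms(1) unfolding linear_hausdorff_def by simp
qed

lemma mult_left_summable_to_single:
  assumes "linear_hausdorff \<U>" and "summable_to \<U> I x r" and "j \<in> I"
    and "\<And>i. i \<in> I \<Longrightarrow> c * x i = (if i = j then a else 0)"
  shows "c * r = a"
proof (rule summable_to_unique[OF assms(1)])
  have lt: "linear_topology \<U>" using assms(1) by (rule linear_hausdorff_imp_linear_topology)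
  show "summable_to \<U> I (\<lambda>i. c * x i) (c * r)" by (rule summable_to_mult_left[OF lt assms(2)])
  show "summable_to \<U> I (\<lambda>i. c * x i) a"
    using summable_to_finite_support[OF lt, of "{j}" I "\<lambda>i. c * x i"] assms(3,4) by simp
qed

lemma summable_to_partial_sums:
  assumes "summable_to \<U> (UNIV :: nat set) x r" and "U \<in> \<U>"
  obtains N where "\<And>n. N \<le> n \<Longrightarrow> sum x {..<n} - r \<in> U"
proof -
  obtain F where "finite F" and F: "\<forall>G. finite G \<and> F \<subseteq> G \<and> G \<subseteq> UNIV \<longrightarrow> sum x G - r \<in> U"
    using assms(1)[unfolded summable_to_def, rule_format, OF assms(2)] by blast
  then obtain N where N: "F \<subseteq> {..<N}" using finite_nat_bounded by blast
  have "sum x {..<n} - r \<in> U" if "N \<le> n" for n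
  proof -
    have "F \<subseteq> {..<n}" using N that by auto
    then show ?thesis using F by simp
  qed
  then show ?thesis by (rule that)
qed

text \<open>Niceness is only stated for index sets of type \<open>'a set set set\<close>. These contain a copy
  of \<open>\<nat>\<close> unless \<open>'a\<close> is finite; in that case the topology is discrete and every summable
  family has finite support.\<close>
lemma nice_summable_mult_nat:
  fixes y :: "nat \<Rightarrow> 'a::ring_1"
  assumes nice: "nice \<U>" and y: "summable_to \<U> UNIV y s"
  shows "summable_fam \<U> UNIV (\<lambda>n. c n * y n)"
proof (cases "finite (UNIV :: 'a set)")
  case True
  have lh: "linear_hausdorff \<U>" using nice by (rule nice_imp_linear_hausdorff)
  then have lt: "linear_topology \<U>" by (rule linear_hausdorff_imp_linear_topology)
  have "finite (Pow (UNIV :: 'a set))" using True by (rule finite_Pow_iff[THEN iffD2])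
  then have "finite \<U>" by (rule finite_subset[rotated]) simp
  then obtain F where F: "finite F" "F \<subseteq> UNIV" "\<And>n. n \<in> UNIV - F \<Longrightarrow> y n = 0"
    using summable_to_discrete_finite_support[OF finite_linear_hausdorff_discrete[OF lh] y] by metis
  then have "summable_to \<U> UNIV (\<lambda>n. c n * y n) (\<Sum>n\<in>F. c n * y n)"
    by (intro summable_to_finite_support[OF lt F(1,2)]) simp
  then show ?thesis unfolding summable_fam_def by blast
next
  case False
  then obtain f :: "nat \<Rightarrow> 'a" where "inj f" using infinite_countable_subset by blast
  define h :: "nat \<Rightarrow> 'a set set" where "h n = {{f n}}" for n
  have h: "inj h" using \<open>inj f\<close> unfolding h_def inj_def by simp
  then have inv_h: "inv h (h n) = n" for n by simp
  have "summable_to \<U> (range h) (\<lambda>i. y (inv h i)) s"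
    using summable_to_reindex[of h UNIV "\<lambda>i. y (inv h i)" y] h inv_h y by simp
  then have "summable_fam \<U> (range h) (\<lambda>i. c (inv h i) * y (inv h i))"
    using nice[unfolded nice_def, THEN conjunct2, rule_format,
        of "range h" "\<lambda>i. y (inv h i)" "\<lambda>i. c (inv h i)"]
    unfolding summable_fam_def by blast
  then show ?thesis
    using summable_fam_reindex[of h UNIV "\<lambda>i. c (inv h i) * y (inv h i)" "\<lambda>n. c n * y n"] h inv_h
    by simp
qed

section \<open>Units\<close>

lemma is_unit_mult:
  assumes "is_unit a" and "is_unit b"
  shows "is_unit (a * b)"
proof -
  obtain a' b' where "a * a' = 1" "a' * a = 1" "b * b' = 1" "b' * b = 1"
    using assms unfolding is_unit_def by blast
  then have "(a * b) * (b' * a') = 1" and "(b' * a') * (a * b) = 1"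
    by (simp_all add: mult.assoc flip: mult.assoc[of b b' a'] mult.assoc[of a' a b])
  then show ?thesis unfolding is_unit_def by blast
qed

lemma is_unit_one_plus_square_zero: "N * N = 0 \<Longrightarrow> is_unit (1 + N)"
  unfolding is_unit_def by (intro exI[of _ "1 - N"]) (simp add: algebra_simps)

lemma is_unit_add_corner:
  assumes "is_unit W" and Wf: "W * f = f" and fD: "f * D = D" and Df: "D * f = 0"
  shows "is_unit (W + D)"
proof -
  have "W * D = (W * f) * D" using fD by (simp add: mult.assoc)
  then have "W + D = W * (1 + D)" using Wf fD by (simp add: distrib_left)
  moreover have "D * D = (D * f) * D" using fD by (simp add: mult.assoc)
  then have "D * D = 0" using Df by simp
  ultimately show ?thesis using is_unit_mult[OF assms(1) is_unit_one_plus_square_zero] by simp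
qed

lemma is_unit_if_units_arbitrarily_close:
  fixes u :: "'k \<Rightarrow> 'a::ring_1"
  assumes "limits_of_units_are_units \<U>" and lt: "linear_topology \<U>"
    and units: "\<And>k. is_unit (u k)" and close: "\<And>U. U \<in> \<U> \<Longrightarrow> \<exists>k. u k - w \<in> U"
  shows "is_unit w"
proof -
  define le :: "'a set \<Rightarrow> 'a set \<Rightarrow> bool" where "le U V \<longleftrightarrow> V \<subseteq> U" for U V
  define net where "net U = u (SOME k. u k - w \<in> U)" for U
  have "\<U> \<noteq> {}" and "\<forall>U\<in>\<U>. \<forall>V\<in>\<U>. \<exists>W\<in>\<U>. W \<subseteq> U \<and> W \<subseteq> V"
    using lt unfolding linear_topology_def by (simp, meson le_inf_iff)
  then have "directed \<U> le" unfolding directed_def le_def by auto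
  moreover have "net_converges \<U> \<U> le net w"
    unfolding net_converges_def
  proof
    fix U assume "U \<in> \<U>"
    have near: "net V - w \<in> U" if "V \<in> \<U>" "le U V" for V
    proof -
      have "net V - w \<in> V" unfolding net_def by (rule someI_ex) (rule close[OF that(1)])
      with that(2) show ?thesis unfolding le_def by blast
    qed
    show "\<exists>d0\<in>\<U>. \<forall>V\<in>\<U>. le d0 V \<longrightarrow> net V - w \<in> U"
      using near \<open>U \<in> \<U>\<close> by (intro bexI[of _ U] ballI impI)
  qed
  moreover have "\<forall>U\<in>\<U>. is_unit (net U)" unfolding net_def using units by blast
  ultimately show ?thesis
    using assms(1) unfolding limits_of_units_are_units_def by (elim allE impE) (intro conjI)
qed

section \<open>One exchange step in a suitable ring\<close>

text \<open>Suitability passes to the corner ring \<open>f R f\<close>: decompose \<open>z + (1 - z) = 1\<close> in \<open>R\<close> and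
  cut the resulting idempotent \<open>g \<in> R z\<close> down to \<open>f g\<close>.\<close>
lemma suitable_corner:
  assumes "suitable TYPE('a::ring_1)" and f: "idempotent f" and fz: "f * z = z" and zf: "z * f = (z::'a)"
  obtains e where "idempotent e" "f * e = e" "e * f = e" "in_left_mult e z" "in_left_mult (f - e) (f - z)"
proof -
  have "z + (1 - z) = 1" by simp
  then obtain g h where gg: "g * g = g" and gh: "g + h = 1"
    and "in_left_mult g z" and "in_left_mult h (1 - z)"
    using assms(1) unfolding suitable_def idempotent_def by blast
  then obtain r r' where gr: "g = r * z" and hr: "h = r' * (1 - z)" unfolding in_left_mult_def by blast
  have gf: "g * f = g" using gr zf by (simp add: mult.assoc)
  have ff: "f * f = f" using f unfolding idempotent_def .
  define e where "e = f * g"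
  have "e * e = f * (g * f) * g" unfolding e_def by (simp add: mult.assoc)
  then have "idempotent e" unfolding idempotent_def using gf gg e_def by (simp add: mult.assoc)
  moreover have "f * e = e" unfolding e_def using ff by (simp flip: mult.assoc)
  moreover have ef: "e * f = e" unfolding e_def using gf by (simp add: mult.assoc)
  moreover have "in_left_mult e z"
    unfolding in_left_mult_def e_def gr by (rule exI[of _ "f * r"]) (simp add: mult.assoc)
  moreover have "in_left_mult (f - e) (f - z)"
  proof -
    have "f - e = f * (g + h) - f * g" unfolding e_def gh by simp
    then have "f - e = f * h" by (simp add: distrib_left)
    have "f - e = (f - e) * f" using ff ef by (simp add: algebra_simps)
    also have "\<dots> = f * r' * ((1 - z) * f)" using \<open>f - e = f * h\<close> hr by (simp add: mult.assoc)
    also have "(1 - z) * f = f - z" using zf by (simp add: algebra_simps)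
    finally show ?thesis unfolding in_left_mult_def by blast
  qed
  ultimately show ?thesis by (rule that)
qed

text \<open>Compressing \<open>\<beta> \<in> R (x + t)\<close> to the corner \<open>f R f\<close> writes \<open>f = z + (f - z)\<close> with
  \<open>z \<in> f R x f\<close> and \<open>f - z \<in> f R t f\<close>; splitting \<open>f\<close> along this sum by \<open>suitable_corner\<close>
  gives the piece \<open>f - f'\<close>, reached from \<open>R x\<close>, and the rest \<open>f'\<close>, reached from \<open>R t\<close>.\<close>
lemma exchange_step:
  fixes f \<beta> x t :: "'a::ring_1"
  assumes "suitable TYPE('a)" and f: "idempotent f" and f\<beta>: "f * \<beta> = \<beta>" and \<beta>f: "\<beta> * f = f"
    and "in_left_mult \<beta> (x + t)"
  obtains f' \<alpha> \<beta>' where "idempotent f'" "f * f' = f'" "f' * f = f'"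
    "(f - f') * \<alpha> = \<alpha>" "\<alpha> * f = f - f'" "in_left_mult \<alpha> x"
    "f' * \<beta>' = \<beta>'" "\<beta>' * f = f'" "\<beta>' * f' = f'" "in_left_mult \<beta>' t"
proof -
  obtain q where q: "\<beta> = q * (x + t)" using assms(5) unfolding in_left_mult_def by blast
  have ff: "f * f = f" using f unfolding idempotent_def .
  define z where "z = f * q * x * f"
  have fz: "f * z = z" unfolding z_def using ff by (simp flip: mult.assoc)
  have zf: "z * f = z" unfolding z_def using ff by (simp add: mult.assoc)
  have "f = (f * \<beta>) * f" using f\<beta> \<beta>f by simp
  also have "\<dots> = z + f * q * t * f" unfolding z_def q by (simp add: algebra_simps)
  finally have f_z: "f - z = f * q * t * f" by (simp add: algebra_simps)
  obtain e where "idempotent e" and fe: "f * e = e" and ef: "e * f = e"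
    and "in_left_mult e z" and "in_left_mult (f - e) (f - z)"
    using suitable_corner[OF assms(1) f fz zf] .
  then obtain s s' where ee: "e * e = e" and es: "e = s * z" and f_e: "f - e = s' * (f - z)"
    unfolding idempotent_def in_left_mult_def by blast
  define f' where "f' = f - e"
  define \<alpha> where "\<alpha> = e * s * f * q * x"
  define \<beta>' where "\<beta>' = f' * s' * f * q * t"
  have f'f': "f' * f' = f'" unfolding f'_def using ff fe ef ee by (simp add: algebra_simps)
  have ff': "f * f' = f'" and f'f: "f' * f = f'"
    unfolding f'_def using ff fe ef by (simp_all add: algebra_simps)
  have "\<alpha> * f = e * (s * z)" unfolding \<alpha>_def z_def by (simp add: mult.assoc)
  then have \<alpha>f: "\<alpha> * f = f - f'" using es ee unfolding f'_def by simp
  have e\<alpha>: "(f - f') * \<alpha> = \<alpha>" unfolding \<alpha>_def f'_def using ee by (simp flip: mult.assoc)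
  have "\<beta>' * f = f' * (s' * (f * q * t * f))" unfolding \<beta>'_def by (simp add: mult.assoc)
  then have \<beta>'f: "\<beta>' * f = f'" using f'f' unfolding f_z[symmetric] f_e[symmetric] f'_def by simp
  have "\<beta>' * f' = (\<beta>' * f) * f'" using ff' by (simp add: mult.assoc)
  then have \<beta>'f': "\<beta>' * f' = f'" using \<beta>'f f'f' by simp
  have f'\<beta>': "f' * \<beta>' = \<beta>'" unfolding \<beta>'_def using f'f' by (simp flip: mult.assoc)
  have \<alpha>x: "in_left_mult \<alpha> x" unfolding in_left_mult_def \<alpha>_def by (rule exI[of _ "e * s * f * q"]) simp
  have \<beta>'t: "in_left_mult \<beta>' t" unfolding in_left_mult_def \<beta>'_def by (rule exI[of _ "f' * s' * f * q"]) simp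
  have "idempotent f'" using f'f' unfolding idempotent_def .
  from that[OF this ff' f'f e\<alpha> \<alpha>f \<alpha>x f'\<beta>' \<beta>'f \<beta>'f' \<beta>'t] show ?thesis .
qed

lemma dependent_nat_choice_from:
  assumes "P 0 x\<^sub>0" and "\<And>x n. P n x \<Longrightarrow> \<exists>y. P (Suc n) y \<and> Q n x y"
  shows "\<exists>f. f 0 = x\<^sub>0 \<and> (\<forall>n. P n (f n) \<and> Q n (f n) (f (Suc n)))"
proof -
  obtain f where f: "\<forall>n. (P n (f n) \<and> (n = 0 \<longrightarrow> f n = x\<^sub>0)) \<and> Q n (f n) (f (Suc n))"
  proof (rule dependent_nat_choice[of "\<lambda>n x. P n x \<and> (n = 0 \<longrightarrow> x = x\<^sub>0)" Q, THEN exE])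
    show "\<exists>x. P 0 x \<and> (0 = 0 \<longrightarrow> x = x\<^sub>0)" using assms(1) by blast
    show "\<exists>y. (P (Suc n) y \<and> (Suc n = 0 \<longrightarrow> y = x\<^sub>0)) \<and> Q n x y"
      if "P n x \<and> (n = 0 \<longrightarrow> x = x\<^sub>0)" for x n
      using assms(2) that by blast
  qed
  show ?thesis
  proof (intro exI conjI allI)
    show "f 0 = x\<^sub>0" using f by blast
    show "P n (f n)" "Q n (f n) (f (Suc n))" for n using f by blast+
  qed
qed

section \<open>The exchange sequence\<close>

definition exchange_system :: "'a::ring_1 set set \<Rightarrow> 'i set \<Rightarrow> ('i \<Rightarrow> 'a) \<Rightarrow> ('i \<Rightarrow> 'a) \<Rightarrow> bool" where
  "exchange_system \<U> I x e \<longleftrightarrow> (\<forall>i\<in>I. idempotent (e i) \<and> in_left_mult (e i) (x i))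
     \<and> (\<forall>i\<in>I. \<forall>j\<in>I. i \<noteq> j \<longrightarrow> orthogonal (e i) (e j)) \<and> summable_to \<U> I e 1"

locale exchange_sequence =
  fixes F B A :: "nat \<Rightarrow> 'a::ring_1"
  assumes F_idem: "F n * F n = F n"
    and F_F_Suc: "F n * F (Suc n) = F (Suc n)" and F_Suc_F: "F (Suc n) * F n = F (Suc n)"
    and B_0: "B 0 = 1"
    and F_B: "F n * B n = B n"
    and B_Suc_F: "B (Suc n) * F n = F (Suc n)"
    and E_A: "(F n - F (Suc n)) * A n = A n"
    and A_F: "A n * F n = F n - F (Suc n)"
begin

abbreviation E :: "nat \<Rightarrow> 'a" where "E n \<equiv> F n - F (Suc n)"

lemma F_antitone:
  assumes "m \<le> n"
  shows "F m * F n = F n" and "F n * F m = F n"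
proof -
  from assms have "F m * F n = F n \<and> F n * F m = F n"
  proof (induction n rule: dec_induct)
    case base
    show ?case using F_idem by simp
  next
    case (step n)
    have "F m * F (Suc n) = (F m * F n) * F (Suc n)" using F_F_Suc[of n] by (simp add: mult.assoc)
    moreover have "F (Suc n) * F m = F (Suc n) * (F n * F m)" using F_Suc_F[of n] by (simp flip: mult.assoc)
    ultimately show ?case using step.IH F_F_Suc F_Suc_F by simp
  qed
  then show "F m * F n = F n" and "F n * F m = F n" by simp_all
qed

lemma F_E: "F n * E n = E n" and E_F: "E n * F n = E n"
  by (simp_all add: algebra_simps F_idem F_F_Suc F_Suc_F)

lemma E_F_later:
  assumes "m < n"
  shows "E m * F n = 0"
proof -
  have "E m * F n = (E m * F (Suc m)) * F n"
    using F_antitone(1)[of "Suc m" n] assms by (simp add: mult.assoc)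
  moreover have "E m * F (Suc m) = 0" by (simp add: algebra_simps F_idem F_F_Suc)
  ultimately show ?thesis by simp
qed

lemma F_E_earlier:
  assumes "m < n"
  shows "F n * E m = 0"
proof -
  have "F n * E m = F n * (F (Suc m) * E m)"
    using F_antitone(2)[of "Suc m" n] assms by (simp flip: mult.assoc)
  moreover have "F (Suc m) * E m = 0" by (simp add: algebra_simps F_idem F_Suc_F)
  ultimately show ?thesis by simp
qed

lemma E_orthogonal:
  assumes "m \<noteq> n"
  shows "E m * E n = 0"
proof (cases "m < n")
  case True
  have "E m * E n = (E m * F n) * E n" using F_E[of n] by (simp add: mult.assoc)
  with E_F_later[OF True] show ?thesis by simp
next
  case False
  with assms have "n < m" by simp
  have "E m * E n = E m * (F m * E n)" using E_F[of m] by (simp flip: mult.assoc)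
  with F_E_earlier[OF \<open>n < m\<close>] show ?thesis by simp
qed

lemma E_A_eq: "E m * A n = (if m = n then A n else 0)"
proof (cases "m = n")
  case False
  have "E m * A n = (E m * E n) * A n" using E_A[of n] by (simp add: mult.assoc)
  with E_orthogonal[OF False] False show ?thesis by simp
qed (simp add: E_A)

lemma A_F_later:
  assumes "m < n"
  shows "A m * F n = 0"
proof -
  have "A m * F n = (A m * F m) * F n" using F_antitone(1)[of m n] assms by (simp add: mult.assoc)
  with A_F E_F_later[OF assms] show ?thesis by simp
qed

lemma B_F: "B n * F n = F n"
proof (cases n)
  case (Suc m)
  have "B (Suc m) * F (Suc m) = (B (Suc m) * F m) * F (Suc m)" using F_F_Suc[of m] by (simp add: mult.assoc)
  with Suc B_Suc_F F_idem show ?thesis by simp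
qed (simp add: B_0)

lemma is_unit_partial_sum: "is_unit (sum A {..<n} + B n)"
proof (induction n)
  case 0
  show ?case unfolding is_unit_def B_0 by simp
next
  case (Suc n)
  define D where "D = A n + B (Suc n) - B n"
  have "sum A {..<n} * F n = (\<Sum>m<n. A m * F n)" by (rule sum_distrib_right)
  also have "\<dots> = 0" using A_F_later by simp
  finally have W_F: "(sum A {..<n} + B n) * F n = F n" using B_F by (simp add: distrib_right)
  have "F n * A n = (F n * E n) * A n" by (simp add: mult.assoc E_A)
  then have F_A: "F n * A n = A n" by (simp add: F_E E_A)
  have "F n * B (Suc n) = (F n * F (Suc n)) * B (Suc n)" by (simp add: mult.assoc F_B)
  then have F_B_Suc: "F n * B (Suc n) = B (Suc n)" by (simp add: F_F_Suc F_B)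
  have F_D: "F n * D = D" unfolding D_def by (simp add: right_diff_distrib distrib_left F_A F_B_Suc F_B)
  have D_F: "D * F n = 0" unfolding D_def by (simp add: left_diff_distrib distrib_right A_F B_Suc_F B_F)
  have "is_unit (sum A {..<n} + B n + D)" by (rule is_unit_add_corner[OF Suc.IH W_F F_D D_F])
  then show ?case unfolding D_def by (simp add: add.assoc)
qed

lemma exchange_system_if_summable:
  fixes \<U> :: "'a set set" and x :: "nat \<Rightarrow> 'a"
  assumes nice: "nice \<U>" and units: "limits_of_units_are_units \<U>" and x: "summable_to \<U> UNIV x 1"
    and A_x: "\<And>n. in_left_mult (A n) (x n)" and B_x: "\<And>n. in_left_mult (B n) (1 - sum x {..<n})"
  shows "\<exists>e. exchange_system \<U> UNIV x e"
proof -
  have lh: "linear_hausdorff \<U>" using nice by (rule nice_imp_linear_hausdorff)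
  then have lt: "linear_topology \<U>" by (rule linear_hausdorff_imp_linear_topology)
  obtain c where c: "\<And>n. A n = c n * x n" using A_x unfolding in_left_mult_def by metis
  then have "A = (\<lambda>n. c n * x n)" by blast
  then obtain w where A_w: "summable_to \<U> UNIV A w"
    using nice_summable_mult_nat[OF nice x, of c] unfolding summable_fam_def by blast
  have close: "\<exists>n. (sum A {..<n} + B n) - w \<in> U" if U: "U \<in> \<U>" for U
  proof -
    have ideal: "left_ideal U" using linear_topology_left_ideal[OF lt U] .
    obtain N1 where N1: "\<And>n. N1 \<le> n \<Longrightarrow> sum A {..<n} - w \<in> U"
      using summable_to_partial_sums[OF A_w U] by blast
    obtain N2 where N2: "\<And>n. N2 \<le> n \<Longrightarrow> sum x {..<n} - 1 \<in> U"
      using summable_to_partial_sums[OF x U] by blast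
    define n where "n = max N1 N2"
    have "1 - sum x {..<n} \<in> U" using left_ideal_uminus[OF ideal N2[of n]] by (simp add: n_def)
    then have "B n \<in> U" using B_x[of n] ideal unfolding in_left_mult_def left_ideal_def by auto
    moreover have "sum A {..<n} - w \<in> U" using N1 by (simp add: n_def)
    ultimately have "(sum A {..<n} - w) + B n \<in> U" using ideal unfolding left_ideal_def by blast
    then show ?thesis by (intro exI[of _ n]) (simp add: algebra_simps)
  qed
  have "is_unit w" by (rule is_unit_if_units_arbitrarily_close[OF units lt is_unit_partial_sum close])
  then obtain v where wv: "w * v = 1" and vw: "v * w = 1" unfolding is_unit_def by blast
  have E_w: "E m * w = A m" for m
    by (rule mult_left_summable_to_single[OF lh A_w, where j = m]) (simp_all add: E_A_eq)
  define e where "e n = v * A n" for n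
  have e_mult: "e m * e n = (if m = n then e n else 0)" for m n
  proof -
    have "e m * e n = v * ((E m * w) * v) * A n" unfolding e_def E_w by (simp add: mult.assoc)
    also have "\<dots> = v * (E m * A n)" using wv by (simp add: mult.assoc)
    finally show ?thesis unfolding e_def E_A_eq by simp
  qed
  have "summable_to \<U> UNIV e 1" using summable_to_mult_left[OF lt A_w, of v] vw unfolding e_def by simp
  moreover have "in_left_mult (e n) (x n)" for n
    unfolding e_def in_left_mult_def c by (rule exI[of _ "v * c n"]) (simp add: mult.assoc)
  ultimately have "exchange_system \<U> UNIV x e"
    unfolding exchange_system_def idempotent_def orthogonal_def using e_mult by simp
  then show ?thesis by blast
qed


end

lemma exchange_sequence_exists:
  fixes x :: "nat \<Rightarrow> 'a::ring_1"
  assumes suitable: "suitable TYPE('a)"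
  obtains F B A where "exchange_sequence F B A"
    and "\<And>n. in_left_mult (A n) (x n)" and "\<And>n. in_left_mult (B n) (1 - sum x {..<n})"
proof -
  define t where "t n = 1 - sum x {..<n}" for n
  have t_Suc: "t n = x n + t (Suc n)" for n unfolding t_def by (simp add: algebra_simps)
  define admissible where "admissible n p \<longleftrightarrow> idempotent (fst p) \<and> fst p * snd p = snd p \<and> snd p * fst p = fst p
    \<and> in_left_mult (snd p) (t n)" for n and p :: "'a \<times> 'a"
  define refines where "refines n p p' \<longleftrightarrow> fst p * fst p' = fst p' \<and> fst p' * fst p = fst p' \<and> snd p' * fst p = fst p'
    \<and> (\<exists>\<alpha>. (fst p - fst p') * \<alpha> = \<alpha> \<and> \<alpha> * fst p = fst p - fst p' \<and> in_left_mult \<alpha> (x n))"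
    for n and p p' :: "'a \<times> 'a"
  have "admissible 0 (1, 1)" unfolding admissible_def t_def idempotent_def in_left_mult_def by simp
  moreover have "\<exists>p'. admissible (Suc n) p' \<and> refines n p p'" if "admissible n p" for n p
  proof -
    have "idempotent (fst p)" "fst p * snd p = snd p" "snd p * fst p = fst p"
      using that unfolding admissible_def by simp_all
    moreover have "in_left_mult (snd p) (x n + t (Suc n))" using that unfolding admissible_def t_Suc[of n] by blast
    ultimately obtain f' \<alpha> \<beta>' where "idempotent f'" "fst p * f' = f'" "f' * fst p = f'"
      "(fst p - f') * \<alpha> = \<alpha>" "\<alpha> * fst p = fst p - f'" "in_left_mult \<alpha> (x n)"
      "f' * \<beta>' = \<beta>'" "\<beta>' * fst p = f'" "\<beta>' * f' = f'" "in_left_mult \<beta>' (t (Suc n))"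
      by (rule exchange_step[OF suitable]) blast
    then show ?thesis unfolding admissible_def refines_def by (intro exI[of _ "(f', \<beta>')"]) auto
  qed
  ultimately obtain s where s0: "s 0 = (1, 1)" and s: "\<And>n. admissible n (s n) \<and> refines n (s n) (s (Suc n))"
    using dependent_nat_choice_from[of admissible "(1, 1)" refines] by blast
  define F where "F n = fst (s n)" for n
  define B where "B n = snd (s n)" for n
  have "\<forall>n. \<exists>\<alpha>. (F n - F (Suc n)) * \<alpha> = \<alpha> \<and> \<alpha> * F n = F n - F (Suc n) \<and> in_left_mult \<alpha> (x n)"
    using s unfolding refines_def F_def by blast
  then obtain A where A: "\<And>n. (F n - F (Suc n)) * A n = A n \<and> A n * F n = F n - F (Suc n)
      \<and> in_left_mult (A n) (x n)"
    by metis
  have "exchange_sequence F B A"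
    by unfold_locales
      (use s s0 A in \<open>simp_all add: admissible_def refines_def F_def B_def idempotent_def\<close>)
  moreover have "in_left_mult (B n) (1 - sum x {..<n})" for n
    using s unfolding admissible_def B_def t_def by blast
  ultimately show ?thesis using A that by blast
qed

section \<open>Reduction to \<open>\<nat>\<close>-indexed families\<close>

lemma exchange_system_restrict:
  assumes "J \<subseteq> I" and x0: "\<And>i. i \<in> I - J \<Longrightarrow> x i = 0" and "exchange_system \<U> I x e"
  shows "exchange_system \<U> J x e"
proof -
  have "e i = 0" if "i \<in> I - J" for i
    using assms(3) x0[OF that] that unfolding exchange_system_def in_left_mult_def by auto
  then have "summable_to \<U> J e 1"
    using assms(3) summable_to_zero_extend[OF assms(1), of e] unfolding exchange_system_def by blast
  then show ?thesis using assms(1,3) unfolding exchange_system_def by blast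
qed

lemma exchange_system_reindex:
  assumes g: "inj_on g I" and y: "\<And>i. i \<in> I \<Longrightarrow> y (g i) = x i"
    and "exchange_system \<U> (g ` I) y e"
  shows "exchange_system \<U> I x (\<lambda>i. e (g i))"
proof -
  have "\<forall>i\<in>I. \<forall>j\<in>I. i \<noteq> j \<longrightarrow> g i \<noteq> g j" using g unfolding inj_on_def by blast
  moreover have "summable_to \<U> I (\<lambda>i. e (g i)) 1"
    using assms(3) summable_to_reindex[OF g, of e "\<lambda>i. e (g i)"] unfolding exchange_system_def by blast
  ultimately show ?thesis using assms(3) y unfolding exchange_system_def by auto
qed

lemma aleph0_exchange_if_nat_exchange:
  fixes \<U> :: "'a::ring_1 set set"
  assumes nat_exchange:
    "\<And>x :: nat \<Rightarrow> 'a. summable_to \<U> UNIV x 1 \<Longrightarrow> \<exists>e. exchange_system \<U> UNIV x e"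
  shows "aleph0_exchange \<U> TYPE('i)"
  unfolding aleph0_exchange_def
proof (intro allI impI)
  fix I :: "'i set" and x assume "countable I \<and> summable_to \<U> I x 1"
  then have "countable I" and x: "summable_to \<U> I x 1" by simp_all
  define g where "g = to_nat_on I"
  have g: "inj_on g I" unfolding g_def using \<open>countable I\<close> by (rule inj_on_to_nat_on)
  define y where "y n = (if n \<in> g ` I then x (inv_into I g n) else 0)" for n
  have y_g: "y (g i) = x i" if "i \<in> I" for i using that g unfolding y_def by simp
  have "summable_to \<U> (g ` I) y 1" using summable_to_reindex[of g I y x, OF g y_g] x by blast
  then have "summable_to \<U> UNIV y 1" using summable_to_zero_extend[of "g ` I" UNIV y] y_def by simp
  then obtain e where "exchange_system \<U> UNIV y e" using nat_exchange by blast
  then have "exchange_system \<U> (g ` I) y e" by (rule exchange_system_restrict[rotated 2]) (simp_all add: y_def)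
  then have "exchange_system \<U> I x (\<lambda>i. e (g i))" using exchange_system_reindex[of g I y x] g y_g by blast
  then show "\<exists>e. (\<forall>i\<in>I. idempotent (e i) \<and> in_left_mult (e i) (x i))
      \<and> (\<forall>i\<in>I. \<forall>j\<in>I. i \<noteq> j \<longrightarrow> orthogonal (e i) (e j)) \<and> summable_to \<U> I e 1"
    unfolding exchange_system_def by (rule exI[of _ "\<lambda>i. e (g i)"])
qed

theorem theorem1:
  fixes \<U> :: "'a::ring_1 set set"
  assumes "suitable TYPE('a)"
    and "nice \<U>"
    and "limits_of_units_are_units \<U>"
  shows "aleph0_exchange \<U> TYPE('i)"
proof (rule aleph0_exchange_if_nat_exchange)
  fix x :: "nat \<Rightarrow> 'a"
  assume "summable_to \<U> UNIV x 1"
  moreover obtain F B A where "exchange_sequence F B A"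
    and "\<And>n. in_left_mult (A n) (x n)" and "\<And>n. in_left_mult (B n) (1 - sum x {..<n})"
    using exchange_sequence_exists[OF assms(1), of x] by blast
  ultimately show "\<exists>e. exchange_system \<U> UNIV x e"
    using exchange_sequence.exchange_system_if_summable assms(2,3) by blast
qed

end
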